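(* There is an absolute constant $c$ such that for every $N\ge1$ and every $\epsilon\in[0,1]$, every randomized XOR decision tree computing ${\rm MAJORITY}$ on $N$-bit inputs with zero-sided error $\epsilon$ has cost at least $\frac23N-\epsilon N-c\sqrt N$.
   Context: For $X=X_0X_1\cdots X_{N-1}\in\{0,1\}^N$, ${\rm MAJORITY}(X)=0$ if $X$ contains more zeros than ones and ${\rm MAJORITY}(X)=1$ otherwise. An XOR decision tree on $N$-bit inputs is a deterministic adaptive algorithm that on input $X$ makes a sequence of queries, each either a single bit $X_i$ or $X_i\oplus X_j$ ($0\le i,j\le N-1$), each chosen depending on previous answers, and then outputs a value. A randomized XOR decision tree is a probability distribution over XOR decision trees; its cost on input $X$ is the maximum number of queries made on $X$ over all trees in its support, and its cost is the maximum of this over all $X\in\{0,1\}^N$. It computes $f$ with zero-sided error $\epsilon$ if on every input $X$ it outputs $f(X)$ with probability at least $1-\epsilon$ and otherwise outputs "I don't know" (never an incorrect value). *)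

theory Defs
  imports "HOL-Probability.Probability_Mass_Function" "HOL-Library.Extended_Real"
begin

(* An input X in {0,1}^N is a bool list of length N (True = 1). *)

definition majority :: "bool list \<Rightarrow> bool" where
  "majority X = (\<not> (length (filter Not X) > length (filter id X)))"

datatype query = QBit nat | QXor nat nat

fun qans :: "query \<Rightarrow> bool list \<Rightarrow> bool" where
  "qans (QBit i) X = X ! i"
| "qans (QXor i j) X = (X ! i \<noteq> X ! j)"

fun qvalid :: "nat \<Rightarrow> query \<Rightarrow> bool" where
  "qvalid N (QBit i) = (i < N)"
| "qvalid N (QXor i j) = (i < N \<and> j < N)"

(* Deterministic XOR decision tree; leaves output Some b (a value) or None ("I don't know").
   At a node, answer 0 (False) goes to the left subtree, answer 1 (True) to the right. *)
datatype xtree = Leaf "bool option" | Node query xtree xtree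

fun valid_tree :: "nat \<Rightarrow> xtree \<Rightarrow> bool" where
  "valid_tree N (Leaf _) = True"
| "valid_tree N (Node q l r) = (qvalid N q \<and> valid_tree N l \<and> valid_tree N r)"

fun run :: "xtree \<Rightarrow> bool list \<Rightarrow> bool option" where
  "run (Leaf out) X = out"
| "run (Node q l r) X = (if qans q X then run r X else run l X)"

fun nqueries :: "xtree \<Rightarrow> bool list \<Rightarrow> nat" where
  "nqueries (Leaf _) X = 0"
| "nqueries (Node q l r) X = Suc (if qans q X then nqueries r X else nqueries l X)"

definition rtree_on :: "nat \<Rightarrow> xtree pmf \<Rightarrow> bool" where
  "rtree_on N T = (\<forall>t\<in>set_pmf T. valid_tree N t)"

definition rcost :: "nat \<Rightarrow> xtree pmf \<Rightarrow> enat" where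
  "rcost N T = (SUP X\<in>{X. length X = N}. SUP t\<in>set_pmf T. enat (nqueries t X))"

definition zero_sided :: "nat \<Rightarrow> (bool list \<Rightarrow> bool) \<Rightarrow> real \<Rightarrow> xtree pmf \<Rightarrow> bool" where
  "zero_sided N f eps T = (\<forall>X. length X = N \<longrightarrow>
     measure_pmf.prob T {t. run t X = Some (f X)} \<ge> 1 - eps \<and>
     (\<forall>t\<in>set_pmf T. run t X = Some (f X) \<or> run t X = None))"

end

theory Submission
  imports Defs
begin

text \<open>Along a computation path the set \<open>S\<close> of inputs consistent with the answers is
  an affine subspace of \<open>{0,1}\<^sup>N\<close>. Its non-constant coordinates fall into link classes (the XOR
  of two coordinates of one class is constant on \<open>S\<close>), and \<open>S\<close> is closed under flipping any
  union of such classes. The potential of \<open>S\<close> is the number of these classes whose \<open>\<plusminus>1\<close>-sum is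
  nonzero; it is \<open>N\<close> on the whole cube. A query either fixes one class or merges two, so it
  lowers the potential, averaged over the two answers, by at most \<open>3/2\<close>. At a leaf that outputs
  a value without ever erring, flipping classes shows that the potential is at most the average
  of \<open>|#1 - #0|\<close> over the inputs reaching the leaf; at an "I don't know" leaf we charge \<open>N\<close>.
  Averaging over the cube, where \<open>|#1 - #0|\<close> averages at most \<open>\<surd>N\<close>, the tree in the support
  with the fewest "I don't know" inputs has depth at least \<open>2N/3 - \<epsilon>N - \<surd>N\<close>.\<close>

section \<open>Link classes of a set of inputs\<close>

definition flip_on :: "nat set \<Rightarrow> bool list \<Rightarrow> bool list" where
  "flip_on F X = map (\<lambda>i. if i \<in> F then \<not> X ! i else X ! i) [0..<length X]"

lemma length_flip_on [simp]: "length (flip_on F X) = length X"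
  by (simp add: flip_on_def)

lemma nth_flip_on [simp]: "k < length X \<Longrightarrow> flip_on F X ! k = (if k \<in> F then \<not> X ! k else X ! k)"
  by (simp add: flip_on_def)

lemma flip_on_flip_on [simp]: "flip_on F (flip_on F X) = X"
  by (rule nth_equalityI) auto

lemma bij_betw_flip_on:
  assumes "\<And>X. X \<in> A \<Longrightarrow> flip_on F X \<in> B" "\<And>X. X \<in> B \<Longrightarrow> flip_on F X \<in> A"
  shows "bij_betw (flip_on F) A B"
  by (rule bij_betw_byWitness[where f' = "flip_on F"]) (use assms in auto)

definition constant_coord :: "bool list set \<Rightarrow> nat \<Rightarrow> bool" where
  "constant_coord S i \<longleftrightarrow> (\<forall>X\<in>S. \<forall>Y\<in>S. X ! i = Y ! i)"

definition linked :: "bool list set \<Rightarrow> nat \<Rightarrow> nat \<Rightarrow> bool" where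
  "linked S i j \<longleftrightarrow> (\<forall>X\<in>S. \<forall>Y\<in>S. (X ! i = X ! j) = (Y ! i = Y ! j))"

definition link_class :: "nat \<Rightarrow> bool list set \<Rightarrow> nat \<Rightarrow> nat set" where
  "link_class N S i = {j. j < N \<and> linked S i j}"

definition free_class_union :: "nat \<Rightarrow> bool list set \<Rightarrow> nat set \<Rightarrow> bool" where
  "free_class_union N S F \<longleftrightarrow>
     F \<subseteq> {..<N} \<and> (\<forall>i\<in>F. \<not> constant_coord S i) \<and> (\<forall>i\<in>F. \<forall>j<N. linked S i j \<longrightarrow> j \<in> F)"

lemma linked_refl: "linked S i i"
  by (simp add: linked_def)

lemma linked_commute: "linked S i j \<longleftrightarrow> linked S j i"
  by (auto simp: linked_def)

lemma linked_sym: "linked S i j \<Longrightarrow> linked S j i"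
  by (simp add: linked_commute)

lemma linked_trans: "linked S i j \<Longrightarrow> linked S j k \<Longrightarrow> linked S i k"
  unfolding linked_def by (smt (verit))

lemma linked_if_constant_coord: "constant_coord S i \<Longrightarrow> constant_coord S j \<Longrightarrow> linked S i j"
  unfolding linked_def constant_coord_def by metis

lemma constant_coord_linked: "constant_coord S i \<Longrightarrow> linked S i j \<Longrightarrow> constant_coord S j"
  unfolding linked_def constant_coord_def by metis

lemma linked_subset: "S' \<subseteq> S \<Longrightarrow> linked S i j \<Longrightarrow> linked S' i j"
  unfolding linked_def by blast

lemma constant_coord_subset: "S' \<subseteq> S \<Longrightarrow> constant_coord S i \<Longrightarrow> constant_coord S' i"
  unfolding constant_coord_def by blast

lemma finite_link_class [simp]: "finite (link_class N S i)"
  by (simp add: link_class_def)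

lemma link_class_subset: "link_class N S i \<subseteq> {..<N}"
  by (auto simp: link_class_def)

lemma link_class_self: "i < N \<Longrightarrow> i \<in> link_class N S i"
  by (simp add: link_class_def linked_refl)

lemma card_link_class_pos: "i < N \<Longrightarrow> card (link_class N S i) > 0"
  using link_class_self finite_link_class by (metis card_gt_0_iff empty_iff)

lemma link_class_eq:
  assumes "j \<in> link_class N S i"
  shows "link_class N S j = link_class N S i"
proof -
  have "linked S i j"
    using assms by (simp add: link_class_def)
  then have "linked S j k \<longleftrightarrow> linked S i k" for k
    by (meson linked_sym linked_trans)
  then show ?thesis
    by (simp add: link_class_def)
qed

lemma link_class_sym: "i < N \<Longrightarrow> k < N \<Longrightarrow> i \<in> link_class N S k \<longleftrightarrow> k \<in> link_class N S i"
  by (simp add: link_class_def linked_commute)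

lemma link_class_disjoint:
  "k < N \<Longrightarrow> k \<notin> link_class N S i \<Longrightarrow> link_class N S k \<inter> link_class N S i = {}"
  by (metis disjoint_iff link_class_eq link_class_self)

lemma not_constant_coord_link_class:
  "m \<in> link_class N S i \<Longrightarrow> \<not> constant_coord S i \<Longrightarrow> \<not> constant_coord S m"
  unfolding link_class_def using constant_coord_linked[OF _ linked_sym] by blast

lemma free_class_union_link_class:
  "i < N \<Longrightarrow> \<not> constant_coord S i \<Longrightarrow> free_class_union N S (link_class N S i)"
  unfolding free_class_union_def link_class_def using constant_coord_linked linked_sym linked_trans
  by blast

lemma free_class_union_Un:
  "free_class_union N S F \<Longrightarrow> free_class_union N S G \<Longrightarrow> free_class_union N S (F \<union> G)"
  unfolding free_class_union_def by blast

lemma free_class_union_disjoint_link_class: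
  assumes "free_class_union N S F" "k < N" "k \<notin> F"
  shows "link_class N S k \<inter> F = {}"
proof -
  have "j \<notin> F" if "linked S k j" for j
    using assms linked_sym[OF that] unfolding free_class_union_def by blast
  then show ?thesis
    by (auto simp: link_class_def)
qed

lemma link_class_subset_free_class_union:
  "free_class_union N S F \<Longrightarrow> k \<in> F \<Longrightarrow> link_class N S k \<subseteq> F"
  unfolding free_class_union_def link_class_def by blast

lemma free_class_union_class_invariant:
  assumes "\<And>k m. k < N \<Longrightarrow> \<not> constant_coord S k \<Longrightarrow> m \<in> link_class N S k \<Longrightarrow> P m \<longleftrightarrow> P k"
  shows "free_class_union N S {k. k < N \<and> \<not> constant_coord S k \<and> P k}"
  unfolding free_class_union_def
proof (intro conjI ballI allI impI)
  fix i j assume i: "i \<in> {k. k < N \<and> \<not> constant_coord S k \<and> P k}" and j: "j < N" "linked S i j"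
  then have "j \<in> link_class N S i"
    by (simp add: link_class_def)
  then show "j \<in> {k. k < N \<and> \<not> constant_coord S k \<and> P k}"
    using i j assms[of i j] not_constant_coord_link_class[of j N S i] by auto
qed auto

lemma free_coords_free_class_union: "free_class_union N S {k. k < N \<and> \<not> constant_coord S k}"
  using free_class_union_class_invariant[of N S "\<lambda>_. True"] by simp

section \<open>The potential\<close>

definition spin :: "bool \<Rightarrow> real" where
  "spin b = (if b then 1 else -1)"

definition class_sum :: "nat \<Rightarrow> bool list set \<Rightarrow> nat \<Rightarrow> bool list \<Rightarrow> real" where
  "class_sum N S i X = (\<Sum>m\<in>link_class N S i. spin (X ! m))"

definition unbalanced :: "nat \<Rightarrow> bool list set \<Rightarrow> nat \<Rightarrow> bool" where
  "unbalanced N S i \<longleftrightarrow> (\<exists>X\<in>S. class_sum N S i X \<noteq> 0)"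

text \<open>The coordinates of a free unbalanced link class share the weight \<open>1\<close>, so the potential
  counts these classes.\<close>

definition coord_weight :: "nat \<Rightarrow> bool list set \<Rightarrow> nat \<Rightarrow> real" where
  "coord_weight N S k =
     (if \<not> constant_coord S k \<and> unbalanced N S k then 1 / real (card (link_class N S k)) else 0)"

definition potential :: "nat \<Rightarrow> bool list set \<Rightarrow> real" where
  "potential N S = (\<Sum>k<N. coord_weight N S k)"

lemma spin_Not [simp]: "spin (\<not> b) = - spin b"
  by (simp add: spin_def)

lemma class_sum_Ints: "class_sum N S i X \<in> \<int>"
  unfolding class_sum_def spin_def by (intro Ints_sum) auto

lemma class_sum_flip_on_inside:
  assumes "length X = N" "link_class N S i \<subseteq> F"
  shows "class_sum N S i (flip_on F X) = - class_sum N S i X"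
proof -
  have "class_sum N S i (flip_on F X) = (\<Sum>m\<in>link_class N S i. - spin (X ! m))"
    unfolding class_sum_def using assms link_class_subset by (intro sum.cong) fastforce+
  then show ?thesis
    by (simp add: class_sum_def sum_negf)
qed

lemma class_sum_flip_on_outside:
  assumes "length X = N" "link_class N S i \<inter> F = {}"
  shows "class_sum N S i (flip_on F X) = class_sum N S i X"
  unfolding class_sum_def using assms link_class_subset by (intro sum.cong) fastforce+

lemma class_sum_eq_or_neg:
  assumes "X \<in> S" "Y \<in> S"
  shows "class_sum N S i Y = class_sum N S i X \<or> class_sum N S i Y = - class_sum N S i X"
proof (cases "X ! i = Y ! i")
  case True
  then have "\<forall>m\<in>link_class N S i. Y ! m = X ! m"
    using assms unfolding link_class_def linked_def by blast
  then show ?thesis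
    unfolding class_sum_def by simp
next
  case False
  then have "\<forall>m\<in>link_class N S i. Y ! m = (\<not> X ! m)"
    using assms unfolding link_class_def linked_def by blast
  then have "class_sum N S i Y = (\<Sum>m\<in>link_class N S i. - spin (X ! m))"
    unfolding class_sum_def by (intro sum.cong) auto
  then show ?thesis
    by (simp add: class_sum_def sum_negf)
qed

lemma unbalanced_iff:
  assumes "X \<in> S"
  shows "unbalanced N S i \<longleftrightarrow> class_sum N S i X \<noteq> 0"
proof
  assume "unbalanced N S i"
  then obtain Y where Y: "Y \<in> S" "class_sum N S i Y \<noteq> 0"
    unfolding unbalanced_def by blast
  then show "class_sum N S i X \<noteq> 0"
    using class_sum_eq_or_neg[OF assms Y(1), of N i] by auto
qed (use assms in \<open>auto simp: unbalanced_def\<close>)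

lemma coord_weight_nonneg: "coord_weight N S k \<ge> 0"
  by (simp add: coord_weight_def)

lemma coord_weight_le_1: "k < N \<Longrightarrow> coord_weight N S k \<le> 1"
  using card_link_class_pos[of k N S] by (auto simp: coord_weight_def)

lemma coord_weight_constant_coord: "constant_coord S k \<Longrightarrow> coord_weight N S k = 0"
  by (simp add: coord_weight_def)

lemma coord_weight_eq:
  assumes "k < N" "\<not> constant_coord S k" "X \<in> S"
  shows "coord_weight N S k = of_bool (class_sum N S k X \<noteq> 0) / real (card (link_class N S k))"
  using assms unbalanced_iff[OF assms(3)] by (simp add: coord_weight_def)

lemma sum_coord_weight_link_class:
  assumes "i < N" "\<not> constant_coord S i"
  shows "(\<Sum>k\<in>link_class N S i. coord_weight N S k) = of_bool (unbalanced N S i)"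
proof -
  have "coord_weight N S k = of_bool (unbalanced N S i) / real (card (link_class N S i))"
    if k: "k \<in> link_class N S i" for k
  proof -
    have "unbalanced N S k = unbalanced N S i"
      unfolding unbalanced_def class_sum_def link_class_eq[OF k] ..
    then show ?thesis
      using not_constant_coord_link_class[OF k assms(2)]
      by (simp add: coord_weight_def link_class_eq[OF k])
  qed
  then show ?thesis
    using card_link_class_pos[OF assms(1), of S] by (simp add: card_gt_0_iff)
qed

lemma potential_nonneg: "potential N S \<ge> 0"
  unfolding potential_def by (intro sum_nonneg coord_weight_nonneg)

lemma potential_le: "potential N S \<le> real N"
proof -
  have "potential N S \<le> (\<Sum>k<N. 1)"
    unfolding potential_def by (intro sum_mono coord_weight_le_1) simp
  then show ?thesis
    by simp
qed

lemma potential_split: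
  "A \<subseteq> {..<N} \<Longrightarrow>
    potential N S = (\<Sum>k\<in>{..<N} - A. coord_weight N S k) + (\<Sum>k\<in>A. coord_weight N S k)"
  unfolding potential_def by (simp add: sum.subset_diff)

lemma potential_eq_sum_free:
  "potential N S = (\<Sum>k | k < N \<and> \<not> constant_coord S k. coord_weight N S k)"
  unfolding potential_def by (rule sum.mono_neutral_right) (auto simp: coord_weight_constant_coord)

section \<open>Inputs consistent with a query history\<close>

definition consistent :: "nat \<Rightarrow> (query \<times> bool) list \<Rightarrow> bool list set" where
  "consistent N Q = {X. length X = N \<and> (\<forall>(q, a)\<in>set Q. qans q X = a)}"

lemma finite_consistent: "finite (consistent N Q)"
proof -
  have "consistent N Q \<subseteq> {X. set X \<subseteq> UNIV \<and> length X = N}"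
    unfolding consistent_def by auto
  then show ?thesis
    using finite_lists_length_eq[of "UNIV :: bool set" N] finite_subset by auto
qed

lemma length_consistent: "X \<in> consistent N Q \<Longrightarrow> length X = N"
  by (simp add: consistent_def)

lemma consistent_Nil: "consistent N [] = {X. length X = N}"
  by (simp add: consistent_def)

lemma consistent_snoc: "consistent N (Q @ [(q, a)]) = {X \<in> consistent N Q. qans q X = a}"
  unfolding consistent_def by auto

locale query_history =
  fixes N :: nat and Q :: "(query \<times> bool) list"
  assumes queries_valid: "\<forall>(q, a)\<in>set Q. qvalid N q"
begin

abbreviation S :: "bool list set" where
  "S \<equiv> consistent N Q"

text \<open>A bit query makes its coordinate constant and an XOR query links its two coordinates,
  so flipping whole free classes preserves every answer.\<close>

lemma flip_on_consistent:
  assumes F: "free_class_union N S F" and X: "X \<in> S"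
  shows "flip_on F X \<in> S"
proof -
  have "qans q (flip_on F X) = a" if qa: "(q, a) \<in> set Q" for q a
  proof (cases q)
    case (QBit i)
    have "i < N"
      using queries_valid qa QBit by auto
    moreover have "constant_coord S i"
      using qa QBit unfolding constant_coord_def consistent_def by fastforce
    then have "i \<notin> F"
      using F unfolding free_class_union_def by blast
    ultimately show ?thesis
      using X qa QBit unfolding consistent_def by auto
  next
    case (QXor i j)
    have ij: "i < N" "j < N"
      using queries_valid qa QXor by auto
    have "linked S i j"
      using qa QXor unfolding linked_def consistent_def by fastforce
    then have "i \<in> F \<longleftrightarrow> j \<in> F"
      using F ij linked_sym unfolding free_class_union_def by blast
    then show ?thesis
      using X qa QXor ij unfolding consistent_def by auto
  qed
  then show ?thesis
    using X unfolding consistent_def by auto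
qed

lemma sum_query_answers:
  "(\<Sum>X\<in>S. g X) = (\<Sum>X\<in>consistent N (Q @ [(q, False)]). g X) + (\<Sum>X\<in>consistent N (Q @ [(q, True)]). g X)"
proof -
  have "S = consistent N (Q @ [(q, False)]) \<union> consistent N (Q @ [(q, True)])"
    and "consistent N (Q @ [(q, False)]) \<inter> consistent N (Q @ [(q, True)]) = {}"
    unfolding consistent_snoc by auto
  then show ?thesis
    using sum.union_disjoint[OF finite_consistent finite_consistent] by metis
qed

end

section \<open>One query\<close>

text \<open>The answer \<open>f\<close> to a query depends only on the link classes inside \<open>A\<close>.\<close>

locale query_restriction = query_history +
  fixes f :: "bool list \<Rightarrow> bool" and a :: bool and A G :: "nat set"
  assumes touched: "free_class_union N S A"
    and toggle_set: "free_class_union N S G" "G \<subseteq> A"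
    and toggle: "\<And>X. X \<in> S \<Longrightarrow> f (flip_on G X) = (\<not> f X)"
    and invariant: "\<And>k X. k < N \<Longrightarrow> \<not> constant_coord S k \<Longrightarrow> k \<notin> A \<Longrightarrow> X \<in> S \<Longrightarrow>
      f (flip_on (link_class N S k) X) = f X"
    and answer_possible: "\<exists>X\<in>S. f X = a"
begin

abbreviation S' :: "bool list set" where
  "S' \<equiv> {X \<in> S. f X = a}"

lemma linked_restrict_outside:
  assumes kl: "k < N" "l < N" "k \<notin> A" "l \<notin> A" and linked': "linked S' k l"
  shows "linked S k l"
proof -
  text \<open>Flipping \<open>G\<close> when necessary maps \<open>S\<close> into \<open>S'\<close> without touching \<open>k\<close> and \<open>l\<close>.\<close>
  define h where "h X = (if f X = a then X else flip_on G X)" for X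
  have h: "h X \<in> S'" "h X ! k = X ! k" "h X ! l = X ! l" if X: "X \<in> S" for X
  proof -
    have "length X = N" "k \<notin> G" "l \<notin> G"
      using X length_consistent toggle_set(2) kl by auto
    moreover have "flip_on G X \<in> S" "f (flip_on G X) = (\<not> f X)"
      using X flip_on_consistent[OF toggle_set(1)] toggle by auto
    ultimately show "h X \<in> S'" "h X ! k = X ! k" "h X ! l = X ! l"
      using X kl by (auto simp: h_def)
  qed
  show ?thesis
    unfolding linked_def
  proof (intro ballI)
    fix X Y assume X: "X \<in> S" and Y: "Y \<in> S"
    have "(h X ! k = h X ! l) = (h Y ! k = h Y ! l)"
      using linked' h(1)[OF X] h(1)[OF Y] unfolding linked_def by blast
    then show "(X ! k = X ! l) = (Y ! k = Y ! l)"
      using h(2,3)[OF X] h(2,3)[OF Y] by simp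
  qed
qed

lemma link_class_restrict_outside:
  assumes k: "k < N" "k \<notin> A" "\<not> constant_coord S k"
  shows "\<not> constant_coord S' k" and "link_class N S' k = link_class N S k"
proof -
  let ?C = "link_class N S k"
  obtain X where X: "X \<in> S'"
    using answer_possible by blast
  have len: "length X = N"
    using X length_consistent by blast
  have flipped: "flip_on ?C X \<in> S'"
    using X flip_on_consistent[OF free_class_union_link_class[OF k(1,3)]] invariant[OF k(1,3,2)]
    by auto
  have flip_k: "flip_on ?C X ! k = (\<not> X ! k)"
    using link_class_self[OF k(1)] k(1) len by simp
  then have "flip_on ?C X ! k \<noteq> X ! k"
    by simp
  then show "\<not> constant_coord S' k"
    using flipped X unfolding constant_coord_def by blast
  have "linked S k l" if l: "l < N" and linked': "linked S' k l" for l
  proof (cases "l \<in> A")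
    case True
    then have "l \<notin> ?C"
      using free_class_union_disjoint_link_class[OF touched k(1,2)] by blast
    then have "flip_on ?C X ! l = X ! l"
      using l len by simp
    moreover have "(X ! k = X ! l) = (flip_on ?C X ! k = flip_on ?C X ! l)"
      using linked' X flipped unfolding linked_def by blast
    ultimately show ?thesis
      using flip_k by blast
  next
    case False
    then show ?thesis
      using linked_restrict_outside k l linked' by blast
  qed
  then show "link_class N S' k = ?C"
    using linked_subset[of S' S] unfolding link_class_def by blast
qed

lemma coord_weight_restrict_outside:
  assumes k: "k < N" "k \<notin> A"
  shows "coord_weight N S' k = coord_weight N S k"
proof (cases "constant_coord S k")
  case True
  then show ?thesis
    using constant_coord_subset[of S' S] by (simp add: coord_weight_def)
next
  case False
  note outside = link_class_restrict_outside[OF k False]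
  obtain X where X: "X \<in> S'"
    using answer_possible by blast
  have "unbalanced N S' k = unbalanced N S k"
    using unbalanced_iff[OF X] unbalanced_iff[of X S] X outside(2) by (simp add: class_sum_def)
  then show ?thesis
    using False outside by (simp add: coord_weight_def)
qed

lemma potential_restrict:
  "potential N S' = (\<Sum>k\<in>{..<N} - A. coord_weight N S k) + (\<Sum>k\<in>A. coord_weight N S' k)"
  using potential_split[of A N S'] touched coord_weight_restrict_outside
  unfolding free_class_union_def by simp

end

context query_history
begin

lemma potential_fix_coord:
  assumes i: "i < N" "\<not> constant_coord S i" and possible: "\<exists>X\<in>S. X ! i = c"
  shows "potential N {X \<in> S. X ! i = c} \<ge> potential N S - 1"
proof -
  let ?C = "link_class N S i"
  interpret query_restriction N Q "\<lambda>X. X ! i" c ?C ?C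
  proof
    show "free_class_union N S ?C"
      using free_class_union_link_class[OF i] .
    show "flip_on ?C X ! i = (\<not> X ! i)" if "X \<in> S" for X
      using that length_consistent link_class_self[OF i(1)] i(1) by simp
    show "flip_on (link_class N S k) X ! i = X ! i" if "k < N" "k \<notin> ?C" "X \<in> S" for k X
      using that length_consistent link_class_sym[OF i(1)] i(1) by simp
  qed (use queries_valid possible in auto)
  have "constant_coord S' m" if "m \<in> ?C" for m
  proof -
    have "linked S' i m"
      using that linked_subset[of S' S] by (simp add: link_class_def)
    moreover have "constant_coord S' i"
      by (simp add: constant_coord_def)
    ultimately show ?thesis
      using constant_coord_linked by blast
  qed
  then have "(\<Sum>k\<in>?C. coord_weight N S' k) = 0"
    by (simp add: coord_weight_constant_coord)
  moreover have "(\<Sum>k\<in>?C. coord_weight N S k) \<le> 1"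
    using sum_coord_weight_link_class[OF i] by simp
  ultimately show ?thesis
    using potential_restrict potential_split[OF link_class_subset[of N S i], of S] by linarith
qed

end

locale xor_merge = query_history +
  fixes i j :: nat and a :: bool
  assumes i: "i < N" "\<not> constant_coord S i" and j: "j < N" "\<not> constant_coord S j"
    and not_linked: "\<not> linked S i j"
    and xor_possible: "\<exists>X\<in>S. qans (QXor i j) X = a"
begin

lemma not_mem_link_class: "j \<notin> link_class N S i"
  using not_linked by (simp add: link_class_def)

lemma link_classes_disjoint: "link_class N S i \<inter> link_class N S j = {}"
  using link_class_disjoint[OF j(1) not_mem_link_class] by blast

sublocale query_restriction N Q "qans (QXor i j)" a "link_class N S i \<union> link_class N S j"
  "link_class N S i"
proof
  show "free_class_union N S (link_class N S i \<union> link_class N S j)"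
    using free_class_union_Un free_class_union_link_class i j by blast
  show "free_class_union N S (link_class N S i)"
    using free_class_union_link_class[OF i] .
  show "qans (QXor i j) (flip_on (link_class N S i) X) = (\<not> qans (QXor i j) X)" if "X \<in> S" for X
    using that length_consistent link_class_self[OF i(1)] not_mem_link_class i(1) j(1) by simp
  show "qans (QXor i j) (flip_on (link_class N S k) X) = qans (QXor i j) X"
    if "k < N" "k \<notin> link_class N S i \<union> link_class N S j" "X \<in> S" for k X
    using that length_consistent link_class_sym[OF i(1)] link_class_sym[OF j(1)] i(1) j(1) by simp
qed (use queries_valid xor_possible in auto)

lemma not_constant_coord_merge: "\<not> constant_coord S' i"
proof -
  let ?A = "link_class N S i \<union> link_class N S j"
  obtain X where X: "X \<in> S" "qans (QXor i j) X = a"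
    using answer_possible by blast
  then have "length X = N"
    using length_consistent by blast
  then have "qans (QXor i j) (flip_on ?A X) = a" "flip_on ?A X ! i \<noteq> X ! i"
    using X(2) link_class_self[OF i(1)] link_class_self[OF j(1)] i(1) j(1) by simp_all
  moreover have "flip_on ?A X \<in> S"
    using flip_on_consistent[OF touched X(1)] .
  ultimately show ?thesis
    using X unfolding constant_coord_def by blast
qed

lemma link_class_merge: "link_class N S' i = link_class N S i \<union> link_class N S j"
proof
  let ?A = "link_class N S i \<union> link_class N S j"
  have "linked S' i j"
    unfolding linked_def by auto
  then have "linked S' i m" if "m \<in> ?A" for m
    using that linked_subset[of S' S] linked_trans unfolding link_class_def by blast
  then show "?A \<subseteq> link_class N S' i"
    using link_class_subset by (auto simp: link_class_def)
  show "link_class N S' i \<subseteq> ?A"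
  proof
    fix l assume "l \<in> link_class N S' i"
    then have l: "l < N" and linked_l: "linked S' l i"
      by (auto simp: link_class_def linked_commute)
    show "l \<in> ?A"
    proof (rule ccontr)
      assume outside: "l \<notin> ?A"
      show False
      proof (cases "constant_coord S l")
        case True
        then show False
          using not_constant_coord_merge constant_coord_subset[of S' S]
            constant_coord_linked[OF _ linked_l] by blast
      next
        case False
        have "i \<in> link_class N S' l"
          using linked_l i(1) by (simp add: link_class_def)
        then have "i \<in> link_class N S l"
          using link_class_restrict_outside(2)[OF l outside False] by simp
        then show False
          using link_class_sym[OF i(1) l] outside by blast
      qed
    qed
  qed
qed

lemma potential_merge:
  assumes X: "X \<in> S'"
  shows "potential N S' = potential N S + of_bool (class_sum N S i X + class_sum N S j X \<noteq> 0)
    - of_bool (class_sum N S i X \<noteq> 0) - of_bool (class_sum N S j X \<noteq> 0)"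
proof -
  let ?A = "link_class N S i \<union> link_class N S j"
  have "X \<in> S"
    using X by blast
  have "class_sum N S' i X = class_sum N S i X + class_sum N S j X"
    unfolding class_sum_def link_class_merge by (simp add: sum.union_disjoint link_classes_disjoint)
  then have "(\<Sum>k\<in>?A. coord_weight N S' k) = of_bool (class_sum N S i X + class_sum N S j X \<noteq> 0)"
    using sum_coord_weight_link_class[of i N S'] not_constant_coord_merge i(1) link_class_merge
      unbalanced_iff[OF X]
    by simp
  moreover have "(\<Sum>k\<in>?A. coord_weight N S k)
      = of_bool (class_sum N S i X \<noteq> 0) + of_bool (class_sum N S j X \<noteq> 0)"
    using sum.union_disjoint[OF finite_link_class finite_link_class link_classes_disjoint,
        of "coord_weight N S"] sum_coord_weight_link_class[OF i] sum_coord_weight_link_class[OF j] unbalanced_iff[OF \<open>X \<in> S\<close>]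
    by simp
  moreover have "?A \<subseteq> {..<N}"
    using link_class_subset by blast
  ultimately show ?thesis
    using potential_restrict potential_split[of ?A N S] by simp
qed

end

context query_history
begin

lemma query_cases:
  assumes q: "qvalid N q" and possible: "\<And>a. \<exists>X\<in>S. qans q X = a"
  obtains (fix_coord) i c where "i < N" "\<not> constant_coord S i"
      "\<And>a X. X \<in> S \<Longrightarrow> qans q X = a \<longleftrightarrow> X ! i = c a"
    | (merge) i j where "q = QXor i j" "\<And>a. xor_merge N Q i j a"
proof -
  obtain X Y where X: "X \<in> S" "qans q X = True" and Y: "Y \<in> S" "qans q Y = False"
    using possible by blast
  show thesis
  proof (cases q)
    case (QBit i)
    then have "\<not> constant_coord S i"
      using X Y unfolding constant_coord_def by auto
    then show thesis
      using fix_coord[of i id] q QBit by simp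
  next
    case (QXor i j)
    have ij: "i < N" "j < N"
      using q QXor by auto
    have not_linked: "\<not> linked S i j"
      using X Y QXor unfolding linked_def by auto
    consider "constant_coord S j" | "constant_coord S i" | "\<not> constant_coord S i" "\<not> constant_coord S j"
      by blast
    then show thesis
    proof cases
      case 1
      then obtain b where "\<And>X. X \<in> S \<Longrightarrow> X ! j = b"
        using X unfolding constant_coord_def by blast
      moreover have "\<not> constant_coord S i"
        using 1 not_linked linked_if_constant_coord by blast
      ultimately show thesis
        using fix_coord[of i "\<lambda>a. a \<noteq> b"] ij QXor by auto
    next
      case 2
      then obtain b where "\<And>X. X \<in> S \<Longrightarrow> X ! i = b"
        using X unfolding constant_coord_def by blast
      moreover have "\<not> constant_coord S j"
        using 2 not_linked linked_if_constant_coord by blast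
      ultimately show thesis
        using fix_coord[of j "\<lambda>a. a \<noteq> b"] ij QXor by auto
    next
      case 3
      have "xor_merge N Q i j a" for a
        using possible[of a] by unfold_locales (use queries_valid ij 3 not_linked QXor in auto)
      then show thesis
        using merge QXor by blast
    qed
  qed
qed

lemma query_toggle:
  assumes q: "qvalid N q" and possible: "\<And>a. \<exists>X\<in>S. qans q X = a"
  obtains G where "free_class_union N S G" "\<And>X. X \<in> S \<Longrightarrow> qans q (flip_on G X) = (\<not> qans q X)"
  using q possible
proof (cases rule: query_cases)
  case (fix_coord i c)
  have "qans q (flip_on (link_class N S i) X) = (\<not> qans q X)" if X: "X \<in> S" for X
  proof -
    have "flip_on (link_class N S i) X \<in> S"
      using flip_on_consistent[OF free_class_union_link_class[OF fix_coord(1,2)] X] .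
    moreover have "flip_on (link_class N S i) X ! i = (\<not> X ! i)"
      using X length_consistent link_class_self[OF fix_coord(1)] fix_coord(1) by simp
    ultimately show ?thesis
      using fix_coord(3) X by (metis (full_types))
  qed
  then show thesis
    using that free_class_union_link_class[OF fix_coord(1,2)] by blast
next
  case (merge i j)
  interpret xor_merge N Q i j True
    using merge(2) .
  show thesis
    by (rule that[OF toggle_set(1)]) (simp only: merge(1) toggle)
qed

lemma card_query_answers:
  assumes q: "qvalid N q" and possible: "\<And>a. \<exists>X\<in>S. qans q X = a"
  shows "card {X \<in> S. qans q X = False} = card {X \<in> S. qans q X = True}"
proof -
  obtain G where G: "free_class_union N S G" "\<And>X. X \<in> S \<Longrightarrow> qans q (flip_on G X) = (\<not> qans q X)"
    using query_toggle[OF assms] by blast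
  have "bij_betw (flip_on G) {X \<in> S. qans q X = False} {X \<in> S. qans q X = True}"
    by (rule bij_betw_flip_on) (use G flip_on_consistent in auto)
  then show ?thesis
    by (rule bij_betw_same_card)
qed

lemma potential_query:
  assumes q: "qvalid N q" and possible: "\<And>a. \<exists>X\<in>S. qans q X = a"
  shows "potential N {X \<in> S. qans q X = False} + potential N {X \<in> S. qans q X = True}
    \<ge> 2 * potential N S - 3"
  using q possible
proof (cases rule: query_cases)
  case (fix_coord i c)
  have "potential N {X \<in> S. qans q X = a} \<ge> potential N S - 1" for a
  proof -
    have "{X \<in> S. qans q X = a} = {X \<in> S. X ! i = c a}" and "\<exists>X\<in>S. X ! i = c a"
      using fix_coord(3) possible[of a] by auto
    then show ?thesis
      using potential_fix_coord[OF fix_coord(1,2)] by simp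
  qed
  from this[of False] this[of True] show ?thesis
    by linarith
next
  case (merge i j)
  interpret xor_merge N Q i j False
    using merge(2) .
  obtain X where X: "X \<in> S" "qans q X = False"
    using possible by blast
  define Y where "Y = flip_on (link_class N S i) X"
  have Y: "Y \<in> S" "qans q Y = True"
    using flip_on_consistent[OF toggle_set(1) X(1)] toggle[OF X(1)] X(2) merge(1) by (simp_all add: Y_def)
  have len: "length X = N"
    using X(1) length_consistent by blast
  have "class_sum N S i Y = - class_sum N S i X" "class_sum N S j Y = class_sum N S j X"
    unfolding Y_def using class_sum_flip_on_inside[OF len] class_sum_flip_on_outside[OF len]
      link_classes_disjoint by (auto simp: Int_commute)
  moreover have "X \<in> {X \<in> S. qans (QXor i j) X = False}" "Y \<in> {X \<in> S. qans (QXor i j) X = True}"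
    using X Y merge(1) by simp_all
  note merged = potential_merge[OF this(1)] xor_merge.potential_merge[OF merge(2) this(2)]
  define x y where "x = class_sum N S i X" and "y = class_sum N S j X"
  have "of_bool (x + y \<noteq> 0) + of_bool (- x + y \<noteq> 0) - 2 * of_bool (x \<noteq> 0) - 2 * of_bool (y \<noteq> 0)
      \<ge> (-3 :: real)"
    by auto
  ultimately show ?thesis
    using merged merge(1) unfolding x_def y_def by simp
qed

lemma potential_query_average:
  assumes q: "qvalid N q"
  shows "real (card (consistent N (Q @ [(q, False)]))) * potential N (consistent N (Q @ [(q, False)]))
       + real (card (consistent N (Q @ [(q, True)]))) * potential N (consistent N (Q @ [(q, True)]))
       \<ge> real (card S) * (potential N S - 3 / 2)"
proof -
  let ?S = "\<lambda>a. {X \<in> S. qans q X = a}"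
  have "real (card (?S False)) * potential N (?S False) + real (card (?S True)) * potential N (?S True)
      \<ge> real (card S) * (potential N S - 3 / 2)"
  proof (cases "\<forall>a. \<exists>X\<in>S. qans q X = a")
    case True
    have "S = ?S False \<union> ?S True" "?S False \<inter> ?S True = {}"
      by auto
    then have "card S = card (?S False) + card (?S True)"
      using finite_consistent card_Un_disjoint by (metis finite_Un)
    moreover have "card (?S False) = card (?S True)"
      using card_query_answers q True by blast
    moreover have "potential N (?S False) + potential N (?S True) \<ge> 2 * potential N S - 3"
      using potential_query q True by blast
    then have "real (card (?S True)) * (2 * potential N S - 3)
        \<le> real (card (?S True)) * (potential N (?S False) + potential N (?S True))"
      by (rule mult_left_mono) simp
    ultimately show ?thesis
      by (simp add: algebra_simps)
  next
    case False
    then obtain a where empty: "?S a = {}"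
      by blast
    have full: "?S (\<not> a) = S"
      using empty by auto
    have "real (card (?S False)) * potential N (?S False) + real (card (?S True)) * potential N (?S True)
        = real (card (?S a)) * potential N (?S a) + real (card (?S (\<not> a))) * potential N (?S (\<not> a))"
      by (cases a) simp_all
    also have "\<dots> = real (card S) * potential N S"
      unfolding empty full by simp
    finally show ?thesis
      using potential_nonneg[of N S] by (simp add: algebra_simps)
  qed
  then show ?thesis
    unfolding consistent_snoc .
qed

end

section \<open>Leaves\<close>

lemma sum_class_average:
  fixes h :: "'a \<Rightarrow> real"
  assumes fin: "finite U" and self: "\<And>k. k \<in> U \<Longrightarrow> k \<in> C k" and sub: "\<And>k. k \<in> U \<Longrightarrow> C k \<subseteq> U"
    and eq: "\<And>k m. k \<in> U \<Longrightarrow> m \<in> C k \<Longrightarrow> C m = C k"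
  shows "(\<Sum>k\<in>U. h k) = (\<Sum>k\<in>U. (\<Sum>m\<in>C k. h m) / real (card (C k)))"
proof -
  have restrict: "(\<Sum>m\<in>C k. g m) = (\<Sum>m\<in>U. if m \<in> C k then g m else 0)" if "k \<in> U" for k and g :: "'a \<Rightarrow> real"
    using sum.inter_restrict[OF fin, of g "C k"] sub[OF that] by (simp add: Int_absorb1 inf_commute)
  have mem_iff: "m \<in> C k \<longleftrightarrow> k \<in> C m" if "k \<in> U" "m \<in> U" for k m
  proof
    assume "m \<in> C k"
    then have "C m = C k"
      by (rule eq[OF that(1)])
    then show "k \<in> C m"
      using self[OF that(1)] by simp
  next
    assume "k \<in> C m"
    then have "C k = C m"
      by (rule eq[OF that(2)])
    then show "m \<in> C k"
      using self[OF that(2)] by simp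
  qed
  have swap_term: "(if m \<in> C k then h m / real (card (C k)) else 0)
      = (if k \<in> C m then h m / real (card (C m)) else 0)" if "k \<in> U" "m \<in> U" for k m
    using mem_iff[OF that] eq[OF that(1), of m] by (cases "m \<in> C k") simp_all
  have "(\<Sum>m\<in>C k. h m) / real (card (C k)) = (\<Sum>m\<in>U. if m \<in> C k then h m / real (card (C k)) else 0)"
    if "k \<in> U" for k
    unfolding sum_divide_distrib by (rule restrict[OF that])
  then have "(\<Sum>k\<in>U. (\<Sum>m\<in>C k. h m) / real (card (C k)))
      = (\<Sum>k\<in>U. \<Sum>m\<in>U. if m \<in> C k then h m / real (card (C k)) else 0)"
    by simp
  also have "\<dots> = (\<Sum>m\<in>U. \<Sum>k\<in>U. if k \<in> C m then h m / real (card (C m)) else 0)"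
    by (subst sum.swap) (auto intro!: sum.cong swap_term)
  also have "\<dots> = (\<Sum>m\<in>U. h m)"
  proof (intro sum.cong refl)
    fix m assume m: "m \<in> U"
    have "card (C m) > 0"
      using self[OF m] sub[OF m] fin finite_subset card_gt_0_iff by blast
    then show "(\<Sum>k\<in>U. if k \<in> C m then h m / real (card (C m)) else 0) = h m"
      using restrict[OF m, of "\<lambda>_. h m / real (card (C m))"] by simp
  qed
  finally show ?thesis ..
qed

definition bias :: "bool list \<Rightarrow> real" where
  "bias X = sum_list (map spin X)"

lemma bias_eq_count: "bias X = real (length (filter id X)) - real (length (filter Not X))"
  by (induction X) (auto simp: bias_def spin_def)

lemma spin_mult_bias_nonneg: "majority X = b \<Longrightarrow> spin b * bias X \<ge> 0"
  by (auto simp: majority_def spin_def bias_eq_count)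

lemma bias_eq_sum_nth: "bias X = (\<Sum>k<length X. spin (X ! k))"
  by (simp add: bias_def sum_list_sum_nth atLeast0LessThan)

context query_history
begin

abbreviation free_coords :: "nat set" where
  "free_coords \<equiv> {k. k < N \<and> \<not> constant_coord S k}"

lemma sum_free_spin_eq:
  "(\<Sum>k\<in>free_coords. spin (Y ! k)) = (\<Sum>k\<in>free_coords. class_sum N S k Y / real (card (link_class N S k)))"
  unfolding class_sum_def
proof (rule sum_class_average)
  show "link_class N S k \<subseteq> free_coords" if "k \<in> free_coords" for k
    using that link_class_subset[of N S k] not_constant_coord_link_class[of _ N S k] by auto
qed (auto simp: link_class_self link_class_eq)

text \<open>Flipping the free classes whose sum has the sign of \<open>b\<close> turns every class sum against \<open>b\<close>.\<close>

lemma exists_class_sums_against: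
  assumes X: "X \<in> S"
  obtains Y where "Y \<in> S" "\<And>k. k \<in> free_coords \<Longrightarrow> spin b * class_sum N S k Y = - \<bar>class_sum N S k X\<bar>"
proof -
  have len: "length X = N"
    using X length_consistent by blast
  define G where "G = {k. k < N \<and> \<not> constant_coord S k \<and> spin b * class_sum N S k X > 0}"
  have G: "free_class_union N S G"
    unfolding G_def
  proof (rule free_class_union_class_invariant)
    fix k m assume m: "m \<in> link_class N S k"
    have "class_sum N S m X = class_sum N S k X"
      unfolding class_sum_def link_class_eq[OF m] ..
    then show "spin b * class_sum N S m X > 0 \<longleftrightarrow> spin b * class_sum N S k X > 0"
      by simp
  qed
  have "spin b * class_sum N S k (flip_on G X) = - \<bar>class_sum N S k X\<bar>" if k: "k \<in> free_coords" for k
  proof (cases "k \<in> G")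
    case True
    then have "class_sum N S k (flip_on G X) = - class_sum N S k X"
      using class_sum_flip_on_inside[OF len link_class_subset_free_class_union[OF G]] by blast
    moreover have "spin b * class_sum N S k X > 0"
      using True by (simp add: G_def)
    ultimately show ?thesis
      by (cases b) (auto simp: spin_def)
  next
    case False
    then have "class_sum N S k (flip_on G X) = class_sum N S k X"
      using class_sum_flip_on_outside[OF len free_class_union_disjoint_link_class[OF G]] k by blast
    moreover have "\<not> spin b * class_sum N S k X > 0"
      using False k by (simp add: G_def)
    ultimately show ?thesis
      by (cases b) (auto simp: spin_def)
  qed
  then show thesis
    using that flip_on_consistent[OF G X] by blast
qed

lemma exists_free_bias_le:
  assumes X: "X \<in> S"
  obtains Y where "Y \<in> S" "spin b * (\<Sum>k\<in>free_coords. spin (Y ! k)) \<le> - potential N S"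
proof -
  obtain Y where Y: "Y \<in> S"
    and against: "\<And>k. k \<in> free_coords \<Longrightarrow> spin b * class_sum N S k Y = - \<bar>class_sum N S k X\<bar>"
    using exists_class_sums_against[OF X] by blast
  have "spin b * (\<Sum>k\<in>free_coords. spin (Y ! k))
      = (\<Sum>k\<in>free_coords. - \<bar>class_sum N S k X\<bar> / real (card (link_class N S k)))"
    unfolding sum_free_spin_eq sum_distrib_left by (intro sum.cong refl) (simp add: against)
  also have "\<dots> \<le> (\<Sum>k\<in>free_coords. - coord_weight N S k)"
  proof (intro sum_mono)
    fix k assume k: "k \<in> free_coords"
    have "of_bool (class_sum N S k X \<noteq> 0) \<le> \<bar>class_sum N S k X\<bar>"
      using Ints_nonzero_abs_ge1[OF class_sum_Ints] by simp
    then show "- \<bar>class_sum N S k X\<bar> / real (card (link_class N S k)) \<le> - coord_weight N S k"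
      using k coord_weight_eq[OF _ _ X] by (simp add: divide_right_mono)
  qed
  also have "\<dots> = - potential N S"
    by (simp add: potential_eq_sum_free sum_negf)
  finally show thesis
    using that Y by blast
qed

lemma sum_free_bias_eq_0: "(\<Sum>X\<in>S. \<Sum>k\<in>free_coords. spin (X ! k)) = 0"
proof -
  let ?R = "flip_on free_coords"
  have "bij_betw ?R S S"
    by (rule bij_betw_flip_on) (use flip_on_consistent[OF free_coords_free_class_union] in auto)
  then have "(\<Sum>X\<in>S. \<Sum>k\<in>free_coords. spin (X ! k)) = (\<Sum>X\<in>S. \<Sum>k\<in>free_coords. spin (?R X ! k))"
    by (rule sum.reindex_bij_betw[symmetric])
  also have "\<dots> = - (\<Sum>X\<in>S. \<Sum>k\<in>free_coords. spin (X ! k))"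
    by (auto simp: length_consistent sum_negf[symmetric] intro!: sum.cong)
  finally show ?thesis
    by simp
qed

text \<open>The bias splits into a part from the constant coordinates, which is the same for all of
  \<open>S\<close>, and a free part, which averages to \<open>0\<close> over \<open>S\<close> and can be pushed below \<open>-potential\<close>.\<close>

lemma potential_le_sum_abs_bias:
  assumes majority: "\<And>X. X \<in> S \<Longrightarrow> majority X = b"
  shows "real (card S) * potential N S \<le> (\<Sum>X\<in>S. \<bar>bias X\<bar>)"
proof (cases "S = {}")
  case False
  then obtain X0 where X0: "X0 \<in> S"
    by blast
  let ?free = "\<lambda>X. \<Sum>k\<in>free_coords. spin (X ! k)"
  define fixed where "fixed = (\<Sum>k\<in>{..<N} - free_coords. spin (X0 ! k))"
  have bias_split: "bias X = fixed + ?free X" if X: "X \<in> S" for X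
  proof -
    have "X ! k = X0 ! k" if "k \<in> {..<N} - free_coords" for k
    proof -
      have "constant_coord S k"
        using that by simp
      then show ?thesis
        using X X0 unfolding constant_coord_def by blast
    qed
    then have "(\<Sum>k\<in>{..<N} - free_coords. spin (X ! k)) = fixed"
      unfolding fixed_def by simp
    moreover have "free_coords \<subseteq> {..<N}"
      by auto
    ultimately show ?thesis
      using X by (simp add: bias_eq_sum_nth length_consistent sum.subset_diff[of free_coords "{..<N}"])
  qed
  have "potential N S \<le> spin b * fixed"
  proof -
    obtain Y where Y: "Y \<in> S" "spin b * ?free Y \<le> - potential N S"
      using exists_free_bias_le[OF X0] by blast
    show ?thesis
      using spin_mult_bias_nonneg[OF majority[OF Y(1)]] bias_split[OF Y(1)] Y(2)
      by (simp add: distrib_left)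
  qed
  then have "real (card S) * potential N S \<le> real (card S) * (spin b * fixed)"
    by (rule mult_left_mono) simp
  also have "\<dots> = (\<Sum>X\<in>S. spin b * bias X)"
    using sum_free_bias_eq_0 by (simp add: bias_split sum.distrib flip: sum_distrib_left)
  also have "\<dots> \<le> (\<Sum>X\<in>S. \<bar>bias X\<bar>)"
    by (intro sum_mono) (simp add: spin_def abs_ge_minus_self abs_ge_self)
  finally show ?thesis .
qed simp

end

section \<open>Trees\<close>

text \<open>Leaves that output "I don't know" are charged \<open>N\<close>, other leaves the bias of the input.
  Both charges dominate the potential, and a query lowers the average potential by at most
  \<open>3/2\<close>: hence the factor \<open>2/3\<close>.\<close>

definition leaf_charge :: "nat \<Rightarrow> xtree \<Rightarrow> bool list \<Rightarrow> real" where
  "leaf_charge N t X = (if run t X = None then real N else \<bar>bias X\<bar>)"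

lemma (in query_history) potential_le_sum_leaf_charge:
  assumes "\<forall>X\<in>S. run (Leaf out) X = Some (majority X) \<or> run (Leaf out) X = None"
  shows "real (card S) * potential N S \<le> (\<Sum>X\<in>S. leaf_charge N (Leaf out) X)"
proof (cases out)
  case None
  then show ?thesis
    using potential_le[of N S] by (simp add: leaf_charge_def mult_left_mono)
next
  case (Some b)
  then show ?thesis
    using potential_le_sum_abs_bias[of b] assms by (simp add: leaf_charge_def)
qed

lemma potential_le_queries_plus_charge:
  assumes "valid_tree N t" "\<forall>(q, a)\<in>set Q. qvalid N q"
    and "\<forall>X\<in>consistent N Q. run t X = Some (majority X) \<or> run t X = None"
  shows "real (card (consistent N Q)) * (2 / 3) * potential N (consistent N Q)
    \<le> (\<Sum>X\<in>consistent N Q. real (nqueries t X) + leaf_charge N t X)"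
  using assms
proof (induction t arbitrary: Q)
  case (Leaf out)
  interpret query_history N Q
    using Leaf.prems(2) by unfold_locales
  have "real (card S) * potential N S \<le> (\<Sum>X\<in>S. leaf_charge N (Leaf out) X)"
    using potential_le_sum_leaf_charge Leaf.prems(3) by blast
  moreover have "real (card S) * (2 / 3) * potential N S \<le> real (card S) * potential N S"
    by (intro mult_right_mono potential_nonneg) simp
  ultimately show ?case
    by simp
next
  case (Node q l r)
  interpret query_history N Q
    using Node.prems(2) by unfold_locales
  let ?S = "\<lambda>a. consistent N (Q @ [(q, a)])"
  have q: "qvalid N q" and "valid_tree N l" "valid_tree N r"
    using Node.prems(1) by auto
  moreover have "\<forall>(q', a)\<in>set (Q @ [(q, a)]). qvalid N q'" for a
    using Node.prems(2) q by auto
  moreover have "\<forall>X\<in>?S False. run l X = Some (majority X) \<or> run l X = None"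
    and "\<forall>X\<in>?S True. run r X = Some (majority X) \<or> run r X = None"
    using Node.prems(3) by (auto simp: consistent_snoc)
  ultimately have IH: "real (card (?S False)) * (2 / 3) * potential N (?S False)
        \<le> (\<Sum>X\<in>?S False. real (nqueries l X) + leaf_charge N l X)"
      "real (card (?S True)) * (2 / 3) * potential N (?S True)
        \<le> (\<Sum>X\<in>?S True. real (nqueries r X) + leaf_charge N r X)"
    using Node.IH by blast+
  have "(\<Sum>X\<in>S. real (nqueries (Node q l r) X) + leaf_charge N (Node q l r) X)
      = (\<Sum>X\<in>?S False. 1 + (real (nqueries l X) + leaf_charge N l X))
      + (\<Sum>X\<in>?S True. 1 + (real (nqueries r X) + leaf_charge N r X))"
    by (subst sum_query_answers[of _ q]) (simp add: consistent_snoc leaf_charge_def add.assoc)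
  also have "\<dots> = real (card S) + (\<Sum>X\<in>?S False. real (nqueries l X) + leaf_charge N l X)
      + (\<Sum>X\<in>?S True. real (nqueries r X) + leaf_charge N r X)"
    using sum_query_answers[of "\<lambda>_. 1 :: real" q] by (simp add: sum.distrib)
  finally show ?case
    using IH potential_query_average[OF q] by (simp add: algebra_simps)
qed

section \<open>Counting over the cube\<close>

lemma sum_lists_Suc:
  fixes f :: "bool list \<Rightarrow> 'a::comm_monoid_add"
  shows "(\<Sum>X | length X = Suc n. f X) = (\<Sum>X | length X = n. f (True # X) + f (False # X))"
proof -
  let ?L = "{X :: bool list. length X = n}"
  have L: "{X. length X = Suc n} = Cons True ` ?L \<union> Cons False ` ?L"
    by (auto simp: length_Suc_conv image_iff)
  have "finite ?L"
    using finite_lists_length_eq[of "UNIV :: bool set" n] by simp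
  then have "(\<Sum>X | length X = Suc n. f X) = (\<Sum>X\<in>Cons True ` ?L. f X) + (\<Sum>X\<in>Cons False ` ?L. f X)"
    unfolding L by (intro sum.union_disjoint) auto
  then show ?thesis
    by (simp add: sum.reindex sum.distrib)
qed

lemma card_lists_bool: "card {X :: bool list. length X = n} = 2 ^ n"
  using card_lists_length_eq[of "UNIV :: bool set" n] by simp

lemma sum_bias_squared: "(\<Sum>X | length X = n. (bias X)\<^sup>2) = real n * 2 ^ n"
proof (induction n)
  case 0
  have "{X :: bool list. length X = 0} = {[]}"
    by auto
  then show ?case
    by (simp add: bias_def)
next
  case (Suc n)
  have "(\<Sum>X | length X = Suc n. (bias X)\<^sup>2) = (\<Sum>X | length X = n. 2 * (bias X)\<^sup>2 + 2)"
    unfolding sum_lists_Suc by (intro sum.cong) (auto simp: bias_def spin_def power2_eq_square algebra_simps)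
  also have "\<dots> = 2 * (real n * 2 ^ n) + 2 * 2 ^ n"
    using Suc by (simp add: sum.distrib card_lists_bool flip: sum_distrib_left)
  finally show ?case
    by (simp add: algebra_simps)
qed

lemma sum_abs_bias_le: "(\<Sum>X | length X = n. \<bar>bias X\<bar>) \<le> sqrt (real n) * 2 ^ n"
proof (cases "n = 0")
  case True
  then have "{X :: bool list. length X = n} = {[]}"
    by auto
  then show ?thesis
    by (simp add: bias_def)
next
  case False
  then have pos: "sqrt (real n) > 0"
    by simp
  text \<open>AM-GM: \<open>2 \<bar>s\<bar> \<surd>n \<le> s\<^sup>2 + n\<close>.\<close>
  have amgm: "\<bar>s\<bar> \<le> (s\<^sup>2 + real n) / (2 * sqrt (real n))" for s :: real
  proof -
    have "0 \<le> (\<bar>s\<bar> - sqrt (real n))\<^sup>2"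
      by simp
    then have "2 * \<bar>s\<bar> * sqrt (real n) \<le> s\<^sup>2 + real n"
      by (simp add: power2_eq_square algebra_simps)
    then show ?thesis
      using pos by (simp add: field_simps)
  qed
  have "(\<Sum>X | length X = n. \<bar>bias X\<bar>) \<le> (\<Sum>X | length X = n. ((bias X)\<^sup>2 + real n) / (2 * sqrt (real n)))"
    by (intro sum_mono amgm)
  also have "\<dots> = (real n * 2 ^ n + real n * 2 ^ n) / (2 * sqrt (real n))"
    by (simp add: sum_divide_distrib[symmetric] sum.distrib card_lists_bool sum_bias_squared)
  also have "\<dots> = sqrt (real n) * 2 ^ n"
    using pos by (simp add: field_simps real_sqrt_mult_self flip: real_sqrt_mult)
  finally show ?thesis .
qed

lemma potential_cube: "potential N {X. length X = N} = real N"
proof -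
  let ?L = "{X :: bool list. length X = N}"
  have "coord_weight N ?L k = 1" if k: "k < N" for k
  proof -
    define X0 where "X0 = replicate N False"
    define X1 where "X1 = X0[k := True]"
    have L: "X0 \<in> ?L" "X1 \<in> ?L"
      by (simp_all add: X0_def X1_def)
    have at_k: "X0 ! k = False" "X1 ! k = True"
      using k by (simp_all add: X0_def X1_def)
    have off_k: "X0 ! j = False" "X1 ! j = False" if "j \<noteq> k" "j < N" for j
      using that by (simp_all add: X0_def X1_def)
    have "\<not> constant_coord ?L k"
      using L at_k unfolding constant_coord_def by (metis (full_types))
    moreover have "link_class N ?L k = {k}"
    proof
      show "link_class N ?L k \<subseteq> {k}"
      proof
        fix j assume "j \<in> link_class N ?L k"
        then have "j < N" "linked ?L k j"
          by (auto simp: link_class_def)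
        then have "(X0 ! k = X0 ! j) = (X1 ! k = X1 ! j)"
          using L unfolding linked_def by blast
        then show "j \<in> {k}"
          using at_k off_k[of j] \<open>j < N\<close> by auto
      qed
    qed (simp add: link_class_self k)
    moreover have "class_sum N ?L k X0 \<noteq> 0"
      using k by (simp add: class_sum_def \<open>link_class N ?L k = {k}\<close> X0_def spin_def)
    ultimately show ?thesis
      using coord_weight_eq[OF k _ L(1)] by simp
  qed
  then show ?thesis
    unfolding potential_def by simp
qed

lemma sum_queries_lower_bound:
  assumes valid: "valid_tree N t"
    and never_wrong: "\<And>X. length X = N \<Longrightarrow> run t X = Some (majority X) \<or> run t X = None"
    and few_unknown: "real (card {X. length X = N \<and> run t X = None}) \<le> eps * 2 ^ N"
  shows "2 ^ N * (2 / 3 * real N - eps * real N - sqrt (real N)) \<le> (\<Sum>X | length X = N. real (nqueries t X))"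
proof -
  let ?L = "{X :: bool list. length X = N}"
  have fin: "finite ?L"
    using finite_lists_length_eq[of "UNIV :: bool set" N] by simp
  have "2 / 3 * real N * 2 ^ N \<le> (\<Sum>X\<in>?L. real (nqueries t X) + leaf_charge N t X)"
    using potential_le_queries_plus_charge[of N t "[]"] valid never_wrong
    by (simp add: consistent_Nil potential_cube card_lists_bool algebra_simps)
  also have "\<dots> \<le> (\<Sum>X\<in>?L. real (nqueries t X) + (real N * of_bool (run t X = None) + \<bar>bias X\<bar>))"
    by (intro sum_mono) (simp add: leaf_charge_def)
  also have "\<dots> = (\<Sum>X\<in>?L. real (nqueries t X)) + real N * real (card {X. length X = N \<and> run t X = None})
      + (\<Sum>X\<in>?L. \<bar>bias X\<bar>)"
    using fin by (simp add: sum.distrib Collect_conj_eq flip: sum_distrib_left)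
  finally have "2 / 3 * real N * 2 ^ N \<le> (\<Sum>X\<in>?L. real (nqueries t X))
      + real N * real (card {X. length X = N \<and> run t X = None}) + sqrt (real N) * 2 ^ N"
    using sum_abs_bias_le[of N] by linarith
  moreover have "real N * real (card {X. length X = N \<and> run t X = None}) \<le> real N * (eps * 2 ^ N)"
    using few_unknown by (intro mult_left_mono) simp_all
  ultimately show ?thesis
    by (simp add: algebra_simps)
qed

section \<open>Randomized trees\<close>

lemma exists_in_support_few_events:
  fixes T :: "'a pmf" and E :: "'b \<Rightarrow> 'a set"
  assumes fin: "finite L" and prob: "\<And>x. x \<in> L \<Longrightarrow> measure_pmf.prob T (E x) \<le> eps"
  obtains t where "t \<in> set_pmf T" "real (card {x \<in> L. t \<in> E x}) \<le> eps * real (card L)"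
proof -
  define g where "g t = card {x \<in> L. t \<in> E x}" for t
  have g: "real (g t) = (\<Sum>x\<in>L. indicator (E x) t)" for t
    using fin by (simp add: g_def indicator_def Int_def)
  have integrable: "integrable (measure_pmf T) (\<lambda>t. real (g t))"
    unfolding g by (intro Bochner_Integration.integrable_sum integrable_real_indicator) (auto simp: less_top[symmetric])
  have "measure_pmf.expectation T (\<lambda>t. real (g t)) = (\<Sum>x\<in>L. measure_pmf.prob T (E x))"
    unfolding g by (subst Bochner_Integration.integral_sum) (auto intro!: integrable_real_indicator simp: less_top[symmetric])
  also have "\<dots> \<le> (\<Sum>x\<in>L. eps)"
    by (rule sum_mono) (rule prob)
  also have "\<dots> = eps * real (card L)"
    by simp
  finally have expectation: "measure_pmf.expectation T (\<lambda>t. real (g t)) \<le> eps * real (card L)" .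
  obtain t1 where "t1 \<in> set_pmf T"
    using set_pmf_not_empty[of T] by blast
  then obtain t0 where t0: "t0 \<in> set_pmf T" and least: "\<And>t. t \<in> set_pmf T \<Longrightarrow> g t0 \<le> g t"
    using ex_has_least_nat[of "\<lambda>t. t \<in> set_pmf T" t1 g] by blast
  have "real (g t0) \<le> measure_pmf.expectation T (\<lambda>t. real (g t))"
    by (rule measure_pmf.integral_ge_const[OF integrable]) (simp add: AE_measure_pmf_iff least)
  then show thesis
    using that[OF t0] expectation unfolding g_def by linarith
qed

lemma zero_sided_unknown_prob:
  assumes "zero_sided N f eps T" "length X = N"
  shows "measure_pmf.prob T {t. run t X = None} \<le> eps"
proof -
  have "measure_pmf.prob T {t. run t X = None} + measure_pmf.prob T {t. run t X = Some (f X)}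
      = measure_pmf.prob T ({t. run t X = None} \<union> {t. run t X = Some (f X)})"
    by (intro measure_pmf.finite_measure_Union[symmetric]) auto
  also have "\<dots> \<le> 1"
    by (rule measure_pmf.prob_le_1)
  finally show ?thesis
    using assms unfolding zero_sided_def by fastforce
qed

lemma queries_le_rcost:
  assumes "t \<in> set_pmf T" "length X = N"
  shows "enat (nqueries t X) \<le> rcost N T"
proof -
  have "enat (nqueries t X) \<le> (SUP t\<in>set_pmf T. enat (nqueries t X))"
    by (rule SUP_upper[OF assms(1)])
  also have "\<dots> \<le> rcost N T"
    unfolding rcost_def by (rule SUP_upper) (simp add: assms(2))
  finally show ?thesis .
qed

lemma exists_tree_few_unknown:
  assumes "zero_sided N f eps T"
  obtains t where "t \<in> set_pmf T" "real (card {X. length X = N \<and> run t X = None}) \<le> eps * 2 ^ N"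
  using exists_in_support_few_events[of "{X. length X = N}" T "\<lambda>X. {t. run t X = None}" eps]
    zero_sided_unknown_prob[OF assms] finite_lists_length_eq[of "UNIV :: bool set" N]
  by (auto simp: card_lists_bool)

lemma ereal_le_rcost:
  assumes t: "t \<in> set_pmf T" and bound: "2 ^ N * x \<le> (\<Sum>X | length X = N. real (nqueries t X))"
  shows "ereal x \<le> ereal_of_enat (rcost N T)"
proof (cases "rcost N T")
  case (enat D)
  have "(\<Sum>X | length X = N. real (nqueries t X)) \<le> (\<Sum>X \<in> {X :: bool list. length X = N}. real D)"
    by (rule sum_mono) (use queries_le_rcost[OF t, of _ N] enat in simp)
  also have "\<dots> = 2 ^ N * real D"
    by (simp add: card_lists_bool)
  finally have "2 ^ N * x \<le> 2 ^ N * real D"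
    using bound by linarith
  then show ?thesis
    using enat by simp
qed simp

theorem mainTheorem14:
  shows "\<exists>c::real. \<forall>N::nat. \<forall>eps::real. \<forall>T::xtree pmf.
     N \<ge> 1 \<longrightarrow> 0 \<le> eps \<longrightarrow> eps \<le> 1 \<longrightarrow> rtree_on N T \<longrightarrow> zero_sided N majority eps T \<longrightarrow>
     ereal_of_enat (rcost N T) \<ge> ereal (2/3 * real N - eps * real N - c * sqrt (real N))"
proof (intro exI[of _ 1] allI impI)
  fix N :: nat and eps :: real and T :: "xtree pmf"
  assume "N \<ge> 1" "0 \<le> eps" "eps \<le> 1" and T: "rtree_on N T" and zero_sided: "zero_sided N majority eps T"
  obtain t where t: "t \<in> set_pmf T"
    and few_unknown: "real (card {X. length X = N \<and> run t X = None}) \<le> eps * 2 ^ N"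
    using exists_tree_few_unknown[OF zero_sided] by blast
  have "valid_tree N t"
    using T t unfolding rtree_on_def by blast
  moreover have "run t X = Some (majority X) \<or> run t X = None" if "length X = N" for X
    using zero_sided that t unfolding zero_sided_def by simp
  ultimately have "2 ^ N * (2 / 3 * real N - eps * real N - sqrt (real N))
      \<le> (\<Sum>X | length X = N. real (nqueries t X))"
    using sum_queries_lower_bound few_unknown by blast
  then show "ereal (2 / 3 * real N - eps * real N - 1 * sqrt (real N)) \<le> ereal_of_enat (rcost N T)"
    using ereal_le_rcost[OF t] by simp
qed

end
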